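(* In the setting of the context: if $Y(0)$ is $g$-orthogonal to $P$, there is $\varepsilon>0$ such that the index of $\hat I_\sigma$ restricted to $\mathcal H_P(\sigma)\times\mathcal H_P(\sigma)$ is zero for all $\sigma\in\left]0,\varepsilon\right]$. If $Y(0)$ is not $g$-orthogonal to $P$, then the index of $C_0(V,W)=\int_0^1g(V'(t),W'(t))\,dt$ restricted to $\mathcal H_P(0)\times\mathcal H_P(0)$ is zero.
   Context: $g$ is a nondegenerate symmetric bilinear form on $\mathbb R^n$ of index $1$, $R:[0,1]\to\mathcal L(\mathbb R^n)$ continuous with $g$-symmetric values, $Y:[0,1]\to\mathbb R^n$ a $C^2$ map with $g(Y,Y)<0$ and $Y''=R(t)[Y]$, $P$ a $g$-nondegenerate subspace, $S:P\to P$ $g$-symmetric. $H^1_P([0,1];\mathbb R^n)=\{V\in H^1:V(0)\in P,V(1)=0\}$; for $\sigma\in[0,1]$, $\mathcal H_P(\sigma)=\{V\in H^1_P: g(V'(t),Y(\sigma t))-\sigma g(V(t),Y'(\sigma t))=0\text{ a.e.}\}$; $\hat I_\sigma(V,W)=\int_0^1\big[\tfrac1\sigma g(V',W')+\sigma g(R(\sigma t)[V],W)\big]dt-g(S[V(0)],W(0))$ for $\sigma>0$. The index of a symmetric bilinear form is the maximal dimension of a subspace on which it is negative definite. *)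

theory Defs
  imports "HOL-Analysis.Analysis"
begin

text \<open>A k-dimensional subspace L is
described through a basis v 0, ..., v (k-1) of L (linearly independent elements of U),
L being the set of their linear combinations.\<close>

definition negdef_dims :: "('a::real_vector \<Rightarrow> 'a \<Rightarrow> real) \<Rightarrow> 'a set \<Rightarrow> nat set" where
  "negdef_dims B U = {k. \<exists>v::nat \<Rightarrow> 'a. (\<forall>i<k. v i \<in> U)
      \<and> (\<forall>c. (\<Sum>i<k. c i *\<^sub>R v i) = 0 \<longrightarrow> (\<forall>i<k. c i = 0))
      \<and> (\<forall>c. (\<Sum>i<k. c i *\<^sub>R v i) \<noteq> 0 \<longrightarrow>
              B (\<Sum>i<k. c i *\<^sub>R v i) (\<Sum>i<k. c i *\<^sub>R v i) < 0)}"

definition form_index :: "('a::real_vector \<Rightarrow> 'a \<Rightarrow> real) \<Rightarrow> 'a set \<Rightarrow> enat" where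
  "form_index B U = Sup (enat ` negdef_dims B U)"

definition fun_negdef_dims ::
  "(('b \<Rightarrow> 'a::real_vector) \<Rightarrow> ('b \<Rightarrow> 'a) \<Rightarrow> real) \<Rightarrow> ('b \<Rightarrow> 'a) set \<Rightarrow> nat set" where
  "fun_negdef_dims B U = {k. \<exists>v::nat \<Rightarrow> 'b \<Rightarrow> 'a. (\<forall>i<k. v i \<in> U)
      \<and> (\<forall>c. (\<lambda>t. \<Sum>i<k. c i *\<^sub>R v i t) = (\<lambda>t. 0) \<longrightarrow> (\<forall>i<k. c i = 0))
      \<and> (\<forall>c. (\<lambda>t. \<Sum>i<k. c i *\<^sub>R v i t) \<noteq> (\<lambda>t. 0) \<longrightarrow>
              B (\<lambda>t. \<Sum>i<k. c i *\<^sub>R v i t) (\<lambda>t. \<Sum>i<k. c i *\<^sub>R v i t) < 0)}"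

definition fun_form_index ::
  "(('b \<Rightarrow> 'a::real_vector) \<Rightarrow> ('b \<Rightarrow> 'a) \<Rightarrow> real) \<Rightarrow> ('b \<Rightarrow> 'a) set \<Rightarrow> enat" where
  "fun_form_index B U = Sup (enat ` fun_negdef_dims B U)"

definition is_H1_deriv :: "(real \<Rightarrow> real^'n) \<Rightarrow> (real \<Rightarrow> real^'n) \<Rightarrow> bool" where
  "is_H1_deriv V V' \<longleftrightarrow> V' \<in> borel_measurable (lebesgue_on {0..1})
      \<and> (\<lambda>t. (norm (V' t))\<^sup>2) integrable_on {0..1}
      \<and> (\<forall>t\<in>{0..1}. V t = V 0 + integral {0..t} V')"

definition H1 :: "(real \<Rightarrow> real^'n) set" where
  "H1 = {V. \<exists>V'. is_H1_deriv V V'}"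

text \<open>A chosen weak derivative (unique almost everywhere).\<close>
definition H1_deriv :: "(real \<Rightarrow> real^'n) \<Rightarrow> real \<Rightarrow> real^'n" where
  "H1_deriv V = (SOME V'. is_H1_deriv V V')"

definition H1_P :: "(real^'n) set \<Rightarrow> (real \<Rightarrow> real^'n) set" where
  "H1_P P = {V \<in> H1. V 0 \<in> P \<and> V 1 = 0}"

definition HP_sigma :: "(real^'n \<Rightarrow> real^'n \<Rightarrow> real) \<Rightarrow> (real \<Rightarrow> real^'n) \<Rightarrow> (real \<Rightarrow> real^'n)
     \<Rightarrow> (real^'n) set \<Rightarrow> real \<Rightarrow> (real \<Rightarrow> real^'n) set" where
  "HP_sigma g Y Y' P \<sigma> = {V \<in> H1_P P.
     AE t in lebesgue_on {0..1}. g (H1_deriv V t) (Y (\<sigma> * t)) - \<sigma> * g (V t) (Y' (\<sigma> * t)) = 0}"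

definition I_hat :: "(real^'n \<Rightarrow> real^'n \<Rightarrow> real) \<Rightarrow> (real \<Rightarrow> real^'n^'n) \<Rightarrow> (real^'n \<Rightarrow> real^'n)
     \<Rightarrow> real \<Rightarrow> (real \<Rightarrow> real^'n) \<Rightarrow> (real \<Rightarrow> real^'n) \<Rightarrow> real" where
  "I_hat g R S \<sigma> V W =
     integral {0..1} (\<lambda>t. (1 / \<sigma>) * g (H1_deriv V t) (H1_deriv W t)
                         + \<sigma> * g (R (\<sigma> * t) *v V t) (W t))
     - g (S (V 0)) (W 0)"

definition C0 :: "(real^'n \<Rightarrow> real^'n \<Rightarrow> real) \<Rightarrow> (real \<Rightarrow> real^'n) \<Rightarrow> (real \<Rightarrow> real^'n) \<Rightarrow> real" where
  "C0 g V W = integral {0..1} (\<lambda>t. g (H1_deriv V t) (H1_deriv W t))"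

end

theory Submission
  imports Defs
begin

text \<open>
  Both assertions reduce to showing that the form is positive semidefinite on the
  space in question, which forces its index there to vanish.  The algebraic input is
  Lorentzian: if g has index one and Y(0) is timelike, then g is semidefinite on the
  g-orthogonal complement of Y(0), and even a |u|^2 \<le> g(u,u) + K g(u,Y(0))^2 for
  K = -2/g(Y(0),Y(0)) and some a > 0.

  For \<sigma> = 0 the constraint says g(V', Y(0)) = 0 almost everywhere, so g(V',V') \<ge> 0
  and C0(V,V) \<ge> 0.  For \<sigma> > 0 the constraint g(V', Y(\<sigma> t)) = \<sigma> g(V, Y'(\<sigma> t))
  makes g(V', Y(0)) small, so the coercivity estimate yields
  g(V',V') \<ge> (a/2)|V'|^2 - O(\<sigma>^2)|V|^2 pointwise; since V(1) = 0, |V(t)|^2 \<le> \<integral>|V'|^2,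
  and all lower order terms of \<sigma> I_\<sigma>(V,V) are absorbed for small \<sigma>.  Neither
  argument uses the position of Y(0) relative to P.
\<close>

lemma fun_form_index_eq_0_if_nonneg:
  assumes nonneg: "\<And>V. V \<in> U \<Longrightarrow> B V V \<ge> 0"
  shows "fun_form_index B U = 0"
proof -
  have "k = 0" if "k \<in> fun_negdef_dims B U" for k
  proof (rule ccontr)
    assume "k \<noteq> 0"
    obtain v where v: "\<forall>i<k. v i \<in> U"
      "\<forall>c. (\<lambda>t. \<Sum>i<k. c i *\<^sub>R v i t) = (\<lambda>t. 0) \<longrightarrow> (\<forall>i<k. c i = 0)"
      "\<forall>c. (\<lambda>t. \<Sum>i<k. c i *\<^sub>R v i t) \<noteq> (\<lambda>t. 0) \<longrightarrow>
            B (\<lambda>t. \<Sum>i<k. c i *\<^sub>R v i t) (\<lambda>t. \<Sum>i<k. c i *\<^sub>R v i t) < 0"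
      using \<open>k \<in> fun_negdef_dims B U\<close> unfolding fun_negdef_dims_def by blast
    \<comment> \<open>the first basis vector alone spans a negative definite line\<close>
    define c :: "nat \<Rightarrow> real" where "c i = (if i = 0 then 1 else 0)" for i
    have first: "(\<lambda>t. \<Sum>i<k. c i *\<^sub>R v i t) = v 0"
    proof
      fix t
      have "(\<Sum>i<k. c i *\<^sub>R v i t) = (\<Sum>i<k. if i = 0 then v 0 t else 0)"
        by (rule sum.cong) (auto simp: c_def)
      then show "(\<Sum>i<k. c i *\<^sub>R v i t) = v 0 t" using \<open>k \<noteq> 0\<close> by simp
    qed
    have "v 0 \<noteq> (\<lambda>t. 0)"
    proof
      assume "v 0 = (\<lambda>t. 0)"
      then have "c 0 = 0" using v(2)[rule_format, of c 0] \<open>k \<noteq> 0\<close> unfolding first by blast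
      then show False by (simp add: c_def)
    qed
    then have "B (v 0) (v 0) < 0" using v(3)[rule_format, of c] unfolding first by blast
    moreover have "B (v 0) (v 0) \<ge> 0" using nonneg v(1) \<open>k \<noteq> 0\<close> by blast
    ultimately show False by simp
  qed
  then have "Sup (enat ` fun_negdef_dims B U) \<le> 0"
    by (intro Sup_least) (auto simp: zero_enat_def)
  then show ?thesis unfolding fun_form_index_def by simp
qed

section \<open>Lorentzian linear algebra\<close>

text \<open>If g has index at most one and Y is timelike (g Y Y < 0), then g is positive
  semidefinite on the g-orthogonal complement of Y: a timelike vector orthogonal to Y
  would span, together with Y, a negative definite plane.\<close>

lemma orthogonal_to_timelike_nonneg:
  fixes g :: "'a::real_vector \<Rightarrow> 'a \<Rightarrow> real"
  assumes bil: "bilinear g" and sym: "\<And>v w. g v w = g w v"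
    and idx: "form_index g UNIV \<le> 1" and Y: "g Y Y < 0" and w: "g w Y = 0"
  shows "g w w \<ge> 0"
proof (rule ccontr)
  assume "\<not> g w w \<ge> 0"
  then have ww: "g w w < 0" by simp
  have w0: "w \<noteq> 0" using ww bil by (auto simp: bilinear_lzero)
  note simps = bilinear_ladd[OF bil] bilinear_radd[OF bil] bilinear_lmul[OF bil] bilinear_rmul[OF bil]
  let ?v = "\<lambda>i::nat. if i = 0 then Y else w"
  have comb: "(\<Sum>i<2. c i *\<^sub>R ?v i) = c 0 *\<^sub>R Y + c 1 *\<^sub>R w" for c
    by (simp add: numeral_2_eq_2)
  have quad: "g (c 0 *\<^sub>R Y + c 1 *\<^sub>R w) (c 0 *\<^sub>R Y + c 1 *\<^sub>R w) = (c 0)^2 * g Y Y + (c 1)^2 * g w w"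
    for c :: "nat \<Rightarrow> real"
    using w sym[of Y w] by (simp add: simps power2_eq_square)
  have "2 \<in> negdef_dims g UNIV"
    unfolding negdef_dims_def
  proof (intro CollectI exI[of _ ?v] conjI allI impI)
    fix c :: "nat \<Rightarrow> real" and j :: nat
    assume "(\<Sum>i<2. c i *\<^sub>R ?v i) = 0" and j: "j < 2"
    then have z: "c 0 *\<^sub>R Y + c 1 *\<^sub>R w = 0" by (simp add: comb)
    then have "g (c 0 *\<^sub>R Y + c 1 *\<^sub>R w) Y = 0" using bil by (simp add: bilinear_lzero)
    then have "c 0 * g Y Y = 0" using w by (simp add: simps)
    then have c0: "c 0 = 0" using Y by simp
    then have "c 1 = 0" using z w0 by simp
    then show "c j = 0" using c0 j by (metis One_nat_def less_2_cases)
  next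
    fix c :: "nat \<Rightarrow> real"
    assume "(\<Sum>i<2. c i *\<^sub>R ?v i) \<noteq> 0"
    then have "c 0 \<noteq> 0 \<or> c 1 \<noteq> 0" by (auto simp: comb)
    then have "(c 0)^2 * g Y Y + (c 1)^2 * g w w < 0"
      using Y ww by (smt (verit) mult_nonneg_nonpos mult_pos_neg zero_less_power2 zero_le_power2)
    then show "g (\<Sum>i<2. c i *\<^sub>R ?v i) (\<Sum>i<2. c i *\<^sub>R ?v i) < 0"
      by (simp only: comb quad)
  qed simp
  then have "enat 2 \<le> form_index g UNIV"
    unfolding form_index_def by (intro Sup_upper) auto
  then have "enat 2 \<le> 1" using idx by (rule order_trans)
  then show False by (simp add: one_enat_def)
qed

lemma linear_coefficient_zero:
  fixes b c :: real
  assumes "\<And>t. 0 \<le> 2*t*b + t^2*c"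
  shows "b = 0"
proof -
  define d where "d = \<bar>c\<bar> + 1"
  have d: "d > 0" "c \<le> d" unfolding d_def by auto
  have "0 \<le> 2*(-b/d)*b + (-b/d)^2*c" by (rule assms)
  also have "(-b/d)^2*c \<le> (-b/d)^2*d" using d by (simp add: mult_left_mono)
  also have "2*(-b/d)*b + (-b/d)^2*d = - (b^2/d)"
    using d by (simp add: power2_eq_square field_simps)
  finally have "b^2 \<le> 0" using d by (simp add: divide_le_0_iff)
  then show ?thesis by simp
qed

text \<open>With respect to a timelike Y, the form u \<mapsto> g u u + K (g u Y)^2 with
  K = -2 / g Y Y is positive definite: on the complement of Y it dominates g, which
  is semidefinite there, and a null vector of it would be g-orthogonal to everything.\<close>

lemma timelike_shifted_form_pos:
  fixes g :: "'a::real_vector \<Rightarrow> 'a \<Rightarrow> real"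
  assumes bil: "bilinear g" and sym: "\<And>v w. g v w = g w v"
    and nondeg: "\<And>v. (\<forall>w. g v w = 0) \<Longrightarrow> v = 0"
    and orth: "\<And>w. g w Y = 0 \<Longrightarrow> g w w \<ge> 0" and Y: "g Y Y < 0"
    and "u \<noteq> 0"
  shows "g u u + (-2 / g Y Y) * (g u Y)^2 > 0"
proof -
  note simps = bilinear_ladd[OF bil] bilinear_radd[OF bil] bilinear_lmul[OF bil]
    bilinear_rmul[OF bil] bilinear_lsub[OF bil] bilinear_rsub[OF bil]
  define proj where "proj x = x - (g x Y / g Y Y) *\<^sub>R Y" for x
  have proj_orth: "g (proj x) Y = 0" for x
    using Y by (simp add: proj_def simps)
  have decomp: "g u u + (-2 / g Y Y) * (g u Y)^2 = g (proj u) (proj u) + - ((g u Y)^2 / g Y Y)"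
    using Y sym[of Y u] by (simp add: proj_def simps field_simps power2_eq_square)
  have timelike_part: "- ((g u Y)^2 / g Y Y) \<ge> 0"
    using Y by (simp add: divide_nonneg_neg)
  show ?thesis
  proof (rule ccontr)
    assume "\<not> ?thesis"
    then have "g (proj u) (proj u) = 0" and "- ((g u Y)^2 / g Y Y) = 0"
      using decomp orth[OF proj_orth[of u]] timelike_part by linarith+
    then have uY: "g u Y = 0" and uu: "g u u = 0"
      using Y by (simp_all add: proj_def)
    have "g u z = 0" for z
    proof -
      have "0 \<le> 2*t*(g u (proj z)) + t^2 * g (proj z) (proj z)" for t
      proof -
        have "g (u + t *\<^sub>R proj z) Y = 0" using uY proj_orth by (simp add: simps)
        then have "0 \<le> g (u + t *\<^sub>R proj z) (u + t *\<^sub>R proj z)" by (rule orth)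
        also have "\<dots> = 2*t*(g u (proj z)) + t^2 * g (proj z) (proj z)"
          using uu sym[of "proj z" u] by (simp add: simps power2_eq_square algebra_simps)
        finally show ?thesis .
      qed
      then have "g u (proj z) = 0" by (rule linear_coefficient_zero)
      then show ?thesis using uY by (simp add: proj_def simps)
    qed
    then show False using nondeg \<open>u \<noteq> 0\<close> by blast
  qed
qed

text \<open>A continuous, 2-homogeneous function on a Euclidean space that is positive
  away from the origin is bounded below by a positive multiple of the squared norm
  (compare with its minimum on the unit sphere).\<close>

lemma homogeneous_positive_coercive:
  fixes Q :: "'a::euclidean_space \<Rightarrow> real"
  assumes cont: "continuous_on UNIV Q"
    and hom: "\<And>r v. Q (r *\<^sub>R v) = r^2 * Q v"
    and pos: "\<And>u. u \<noteq> 0 \<Longrightarrow> Q u > 0"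
  shows "\<exists>a>0. \<forall>u. a * (norm u)^2 \<le> Q u"
proof -
  obtain x0 where x0: "x0 \<in> sphere (0::'a) 1" "\<And>y. y \<in> sphere 0 1 \<Longrightarrow> Q x0 \<le> Q y"
    using continuous_attains_inf[of "sphere (0::'a) 1" Q] cont
    by (metis compact_sphere continuous_on_subset sphere_eq_empty subset_UNIV zero_le_one not_le)
  have "Q x0 * (norm u)^2 \<le> Q u" for u
  proof (cases "u = 0")
    case True
    then show ?thesis using hom[of 0 u] by simp
  next
    case False
    have "Q u = (norm u)^2 * Q (u /\<^sub>R norm u)"
      using hom[of "norm u" "u /\<^sub>R norm u"] False by simp
    moreover have "Q x0 \<le> Q (u /\<^sub>R norm u)" using False by (intro x0(2)) simp
    ultimately show ?thesis by (metis mult.commute mult_right_mono zero_le_power2)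
  qed
  moreover have "Q x0 > 0" using x0(1) by (intro pos) auto
  ultimately show ?thesis by blast
qed

lemma lorentzian_coercive:
  fixes g :: "'a::euclidean_space \<Rightarrow> 'a \<Rightarrow> real"
  assumes bil: "bilinear g" and sym: "\<And>v w. g v w = g w v"
    and nondeg: "\<And>v. (\<forall>w. g v w = 0) \<Longrightarrow> v = 0"
    and idx: "form_index g UNIV \<le> 1" and Y: "g Y Y < 0"
  shows "\<exists>a>0. \<forall>u. a * (norm u)^2 \<le> g u u + (-2 / g Y Y) * (g u Y)^2"
proof (rule homogeneous_positive_coercive)
  show "continuous_on UNIV (\<lambda>u. g u u + (-2 / g Y Y) * (g u Y)^2)"
    by (intro continuous_intros bilinear_continuous_on_compose[OF _ _ bil])
  show "g (r *\<^sub>R v) (r *\<^sub>R v) + (-2 / g Y Y) * (g (r *\<^sub>R v) Y)^2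
        = r^2 * (g v v + (-2 / g Y Y) * (g v Y)^2)" for r v
    by (simp add: bilinear_lmul[OF bil] bilinear_rmul[OF bil] power2_eq_square algebra_simps)
  show "g u u + (-2 / g Y Y) * (g u Y)^2 > 0" if "u \<noteq> 0" for u
    using timelike_shifted_form_pos[OF bil sym nondeg _ Y that]
      orthogonal_to_timelike_nonneg[OF bil sym idx Y] by blast
qed

section \<open>Integrals on an interval\<close>

text \<open>An almost-everywhere statement on an interval holds outside a negligible set,
  which is the form of exception the gauge integral understands.\<close>

lemma AE_lebesgue_on_negligible_exception:
  assumes "AE t in lebesgue_on {a..b::real}. P t"
  obtains N where "negligible N" "\<And>t. t \<in> {a..b} - N \<Longrightarrow> P t"
proof -
  obtain N where N: "\<And>t. t \<in> space (lebesgue_on {a..b}) - N \<Longrightarrow> P t"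
    "N \<in> null_sets (lebesgue_on {a..b})"
    using AE_E3[OF assms] by blast
  have "negligible N"
    using N(2) by (simp add: null_sets_restrict_space negligible_iff_null_sets)
  with N(1) that show ?thesis by auto
qed

lemma integral_le_AE:
  fixes f h :: "real \<Rightarrow> real"
  assumes f: "f integrable_on {a..b}" and h: "h integrable_on {a..b}"
    and le: "AE t in lebesgue_on {a..b}. h t \<le> f t"
  shows "integral {a..b} h \<le> integral {a..b} f"
proof -
  obtain N where N: "negligible N" "\<And>t. t \<in> {a..b} - N \<Longrightarrow> h t \<le> f t"
    using AE_lebesgue_on_negligible_exception[OF le] by blast
  \<comment> \<open>max f h agrees with f off N, so it has the same integral and dominates h\<close>
  have same: "\<And>t. t \<in> {a..b} - N \<Longrightarrow> max (f t) (h t) = f t" using N(2) by auto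
  have "integral {a..b} h \<le> integral {a..b} (\<lambda>t. max (f t) (h t))"
    by (rule integral_le[OF h integrable_spike[OF f N(1) same]]) auto
  also have "\<dots> = integral {a..b} f" by (rule integral_spike[OF N(1) same, symmetric])
  finally show ?thesis .
qed

text \<open>Cauchy-Schwarz inequality on the unit interval, from 0 \<le> \<integral>(f - \<integral>f)^2.\<close>

lemma square_integral_le_integral_square:
  fixes f :: "real \<Rightarrow> real"
  assumes f: "f integrable_on {0..1}" and f2: "(\<lambda>t. (f t)^2) integrable_on {0..1}"
  shows "(integral {0..1} f)^2 \<le> integral {0..1} (\<lambda>t. (f t)^2)"
proof -
  define N where "N = integral {0..1} f"
  have "((\<lambda>t. (f t)^2 - 2*N*f t + N^2) has_integral
          (integral {0..1} (\<lambda>t. (f t)^2) - 2*N*N + N^2)) {0..1}"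
  proof (intro has_integral_add has_integral_diff)
    show "((\<lambda>t. (f t)^2) has_integral integral {0..1} (\<lambda>t. (f t)^2)) {0..1}"
      using f2 by (rule integrable_integral)
    show "((\<lambda>t. 2*N*f t) has_integral 2*N*N) {0..1}"
      unfolding N_def by (intro has_integral_mult_right integrable_integral f)
    show "((\<lambda>t::real. N^2) has_integral N^2) {0..1}"
      using has_integral_const_real[of "N^2" 0 1] by simp
  qed
  moreover have "0 \<le> (f t)^2 - 2*N*f t + N^2" for t
  proof -
    have "0 \<le> (f t - N)^2" by simp
    then show ?thesis by (simp add: power2_diff algebra_simps)
  qed
  ultimately have "0 \<le> integral {0..1} (\<lambda>t. (f t)^2) - 2*N*N + N^2"
    by (rule has_integral_nonneg)
  then show ?thesis by (simp add: N_def power2_eq_square)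
qed

section \<open>Functions of class H^1 on [0,1]\<close>

lemma H1_deriv_is_weak_derivative:
  assumes "V \<in> H1"
  shows "is_H1_deriv V (H1_deriv V)"
proof -
  from assms obtain W where "is_H1_deriv V W" by (auto simp: H1_def)
  then show ?thesis unfolding H1_deriv_def by (rule someI[where P = "is_H1_deriv V"])
qed

text \<open>A square integrable weak derivative is integrable, together with its norm:
  both are dominated by 1 + |V'|^2.\<close>

lemma H1_weak_derivative_integrable:
  assumes H: "is_H1_deriv V V'"
  shows "V' integrable_on {0..1}" and "(\<lambda>t. norm (V' t)) integrable_on {0..1}"
proof -
  have meas: "V' \<in> borel_measurable (lebesgue_on {0..1})"
    and sq: "(\<lambda>t. (norm (V' t))^2) integrable_on {0..1}"
    using H unfolding is_H1_deriv_def by blast+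
  have dom: "(\<lambda>t. 1 + (norm (V' t))^2) integrable_on {0..1}"
    by (intro integrable_add integrable_const_ivl sq)
  have le: "norm (V' t) \<le> 1 + (norm (V' t))^2" for t
  proof -
    have "0 \<le> (norm (V' t) - 1/2)^2" by (rule zero_le_power2)
    then show ?thesis by (simp add: power2_eq_square algebra_simps)
  qed
  show "V' integrable_on {0..1}"
    by (rule measurable_bounded_by_integrable_imp_integrable[OF meas dom]) (simp_all add: le)
  have "(\<lambda>t. norm (V' t)) \<in> borel_measurable (lebesgue_on {0..1})"
    using borel_measurable_continuous_on[OF continuous_on_norm_id meas] .
  then show "(\<lambda>t. norm (V' t)) integrable_on {0..1}"
    by (rule measurable_bounded_by_integrable_imp_integrable_real[OF _ dom]) (simp_all add: le)
qed

lemma H1_continuous: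
  assumes H: "is_H1_deriv V V'"
  shows "continuous_on {0..1} V"
proof -
  have "continuous_on {0..1} (\<lambda>t. V 0 + integral {0..t} V')"
    by (intro continuous_intros indefinite_integral_continuous_1
        H1_weak_derivative_integrable(1)[OF H])
  moreover have "\<And>t. t \<in> {0..1} \<Longrightarrow> V 0 + integral {0..t} V' = V t"
    using H unfolding is_H1_deriv_def by (metis (no_types))
  ultimately show ?thesis by (rule continuous_on_eq)
qed

text \<open>Poincare-type bound for H^1 functions vanishing at 1: from V(t) = -\<integral>_t^1 V'
  and Cauchy-Schwarz, |V(t)|^2 \<le> \<integral>_0^1 |V'|^2.\<close>

lemma H1_vanishing_at_1_bound:
  assumes H: "is_H1_deriv V V'" and V1: "V 1 = 0" and t: "t \<in> {0..1}"
  shows "(norm (V t))^2 \<le> integral {0..1} (\<lambda>s. (norm (V' s))^2)"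
proof -
  note int = H1_weak_derivative_integrable[OF H]
  have fundamental: "V s = V 0 + integral {0..s} V'" if "s \<in> {0..1}" for s
    using H that unfolding is_H1_deriv_def by blast
  have split: "integral {0..t} V' + integral {t..1} V' = integral {0..1} V'"
    using t by (intro Henstock_Kurzweil_Integration.integral_combine int(1)) auto
  have "V 0 = - integral {0..1} V'"
    using fundamental[of 1] V1 by (simp add: eq_neg_iff_add_eq_0)
  then have "V t = integral {0..t} V' - integral {0..1} V'"
    using fundamental[OF t] by simp
  also have "\<dots> = - integral {t..1} V'"
    by (simp add: split[symmetric])
  finally have "V t = - integral {t..1} V'" .
  then have "norm (V t) \<le> integral {t..1} (\<lambda>s. norm (V' s))"
    using t by (auto intro!: integral_norm_bound_integral integrable_on_subinterval[OF int(1)]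
        integrable_on_subinterval[OF int(2)])
  also have "\<dots> \<le> integral {0..1} (\<lambda>s. norm (V' s))"
    using t by (intro integral_subset_le integrable_on_subinterval[OF int(2)] int(2)) auto
  finally have "(norm (V t))^2 \<le> (integral {0..1} (\<lambda>s. norm (V' s)))^2"
    by (simp add: power_mono)
  also have "\<dots> \<le> integral {0..1} (\<lambda>s. (norm (V' s))^2)"
    using square_integral_le_integral_square[OF int(2)] H by (simp add: is_H1_deriv_def)
  finally show ?thesis .
qed

text \<open>The energy density g(V',V') of an H^1 function is integrable for bilinear g:
  it is measurable and dominated by a multiple of |V'|^2.\<close>

lemma H1_energy_integrable:
  fixes g :: "real^'n \<Rightarrow> real^'n \<Rightarrow> real"
  assumes bil: "bilinear g" and H: "is_H1_deriv V V'"
  shows "(\<lambda>t. g (V' t) (V' t)) integrable_on {0..1}"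
proof -
  obtain G where G: "\<And>x y. norm (g x y) \<le> G * norm x * norm y"
    using bilinear_bounded_pos[OF bil] by blast
  have meas: "V' \<in> borel_measurable (lebesgue_on {0..1})"
    and sq: "(\<lambda>t. (norm (V' t))^2) integrable_on {0..1}"
    using H unfolding is_H1_deriv_def by blast+
  have "continuous_on UNIV (\<lambda>u. g u u)"
    by (intro bilinear_continuous_on_compose[OF _ _ bil] continuous_on_id)
  from borel_measurable_continuous_on[OF this meas]
  show ?thesis
    by (rule measurable_bounded_by_integrable_imp_integrable_real[OF _ integrable_on_mult_right[OF sq, of G]])
      (use G in \<open>simp_all add: power2_eq_square mult.assoc\<close>)
qed

lemma C0_nonneg_on_HP0:
  fixes g :: "real^'n \<Rightarrow> real^'n \<Rightarrow> real"
  assumes bil: "bilinear g" and orth: "\<And>w. g w (Y 0) = 0 \<Longrightarrow> g w w \<ge> 0"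
    and V: "V \<in> HP_sigma g Y Y' P 0"
  shows "C0 g V V \<ge> 0"
proof -
  have H: "is_H1_deriv V (H1_deriv V)"
    using V by (simp add: HP_sigma_def H1_P_def H1_deriv_is_weak_derivative)
  have "AE t in lebesgue_on {0..1}. g (H1_deriv V t) (Y 0) = 0"
    using V unfolding HP_sigma_def by simp
  then have "AE t in lebesgue_on {0..1}. 0 \<le> g (H1_deriv V t) (H1_deriv V t)"
    by (rule eventually_mono) (rule orth)
  then have "integral {0..1} (\<lambda>t::real. 0) \<le> integral {0..1} (\<lambda>t. g (H1_deriv V t) (H1_deriv V t))"
    by (intro integral_le_AE H1_energy_integrable[OF bil H] integrable_const_ivl)
  then show ?thesis by (simp add: C0_def)
qed

section \<open>Small positive parameters \<sigma>\<close>

lemma matrix_vector_mult_bilinear: "bilinear (\<lambda>(A::real^'n^'m) (x::real^'n). A *v x)"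
  unfolding bilinear_def
  by (auto intro!: linearI simp: algebra_simps scaleR_matrix_vector_assoc)

lemma continuous_matrix_operator_bound:
  fixes R :: "real \<Rightarrow> real^'n^'m"
  assumes "continuous_on {a..b} R"
  obtains Rb where "Rb \<ge> 0" "\<And>s v. s \<in> {a..b} \<Longrightarrow> norm (R s *v v) \<le> Rb * norm v"
proof -
  obtain C where C: "C > 0" "\<And>(A::real^'n^'m) x. norm (A *v x) \<le> C * norm A * norm x"
    using bilinear_bounded_pos[OF matrix_vector_mult_bilinear] by auto
  obtain B where B: "\<And>s. s \<in> {a..b} \<Longrightarrow> norm (R s) \<le> B"
    using compact_imp_bounded[OF compact_continuous_image[OF assms compact_Icc]]
    unfolding bounded_iff by blast
  have "norm (R s *v v) \<le> (C * max B 0) * norm v" if "s \<in> {a..b}" for s v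
  proof -
    have "norm (R s *v v) \<le> C * norm (R s) * norm v" by (rule C(2))
    also have "\<dots> \<le> C * max B 0 * norm v"
      using B[OF that] C(1) by (intro mult_right_mono mult_left_mono) auto
    finally show ?thesis .
  qed
  moreover have "C * max B 0 \<ge> 0" using C(1) by simp
  ultimately show ?thesis using that by blast
qed

lemma small_parameter_exists:
  fixes \<delta> b M :: real
  assumes "\<delta> > 0" "b > 0" "M \<ge> 0"
  obtains \<epsilon> where "\<epsilon> > 0" "\<epsilon> \<le> 1" "\<epsilon> < \<delta>" "\<epsilon> * M \<le> b"
proof
  let ?\<epsilon> = "min (\<delta>/2) (min 1 (b / (M + 1)))"
  show "?\<epsilon> > 0" "?\<epsilon> \<le> 1" "?\<epsilon> < \<delta>" using assms by auto
  have "?\<epsilon> * M \<le> (b / (M + 1)) * M" using assms by (intro mult_right_mono) auto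
  also have "\<dots> \<le> b" using assms by (simp add: field_simps)
  finally show "?\<epsilon> * M \<le> b" .
qed

lemma small_square_parameter_exists:
  fixes b C :: real
  assumes "b > 0" "C \<ge> 0"
  obtains \<eta> where "\<eta> > 0" "C * \<eta>^2 \<le> b"
proof -
  obtain \<eta> where \<eta>: "\<eta> > 0" "\<eta> \<le> 1" "\<eta> * C \<le> b"
    using small_parameter_exists[of 1 b C] assms by (metis zero_less_one)
  have "C * \<eta>^2 = \<eta> * (\<eta> * C)" by (simp add: power2_eq_square)
  also have "\<dots> \<le> \<eta> * C" using \<eta> assms by (intro mult_left_le_one_le) auto
  finally have "C * \<eta>^2 \<le> b" using \<eta>(3) by linarith
  with \<eta>(1) that show ?thesis by blast
qed

lemma constrained_derivative_estimate:
  fixes g :: "'a::real_normed_vector \<Rightarrow> 'a \<Rightarrow> real"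
  assumes bil: "bilinear g"
    and coerc: "\<And>u. a * (norm u)^2 \<le> g u u + K * (g u Y0)^2" and K: "K \<ge> 0"
    and Gb: "\<And>x y. \<bar>g x y\<bar> \<le> G * norm x * norm y" and G: "G \<ge> 0"
    and constraint: "g u Ys = \<sigma> * g w Yd" and Ys: "norm (Ys - Y0) \<le> \<eta>" and Yd: "norm Yd \<le> L"
    and eta: "2*K*G^2*\<eta>^2 \<le> a/2" and sig: "\<sigma> \<ge> 0"
  shows "(a/2) * (norm u)^2 - 2*K*G^2*L^2*\<sigma>^2*(norm w)^2 \<le> g u u"
proof -
  define p where "p = \<sigma> * G * norm w * L"
  define q where "q = G * norm u * \<eta>"
  have L: "L \<ge> 0" using Yd norm_ge_zero order_trans by blast
  have e: "\<eta> \<ge> 0" using Ys norm_ge_zero order_trans by blast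
  have pq: "p \<ge> 0" "q \<ge> 0" using sig G L e by (auto simp: p_def q_def)
  have "\<bar>g u Ys\<bar> \<le> p"
  proof -
    have "\<bar>g u Ys\<bar> = \<sigma> * \<bar>g w Yd\<bar>" using constraint sig by (simp add: abs_mult)
    also have "\<dots> \<le> \<sigma> * (G * norm w * norm Yd)" using Gb sig by (simp add: mult_left_mono)
    also have "\<dots> \<le> \<sigma> * (G * norm w * L)" using Yd sig G by (simp add: mult_left_mono)
    finally show ?thesis by (simp add: p_def mult.assoc)
  qed
  moreover have "\<bar>g u (Ys - Y0)\<bar> \<le> q"
  proof -
    have "\<bar>g u (Ys - Y0)\<bar> \<le> G * norm u * norm (Ys - Y0)" by (rule Gb)
    also have "\<dots> \<le> G * norm u * \<eta>" using Ys G by (simp add: mult_left_mono)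
    finally show ?thesis by (simp add: q_def)
  qed
  moreover have "g u Y0 = g u Ys - g u (Ys - Y0)" by (simp add: bilinear_rsub[OF bil])
  ultimately have "\<bar>g u Y0\<bar> \<le> p + q" by linarith
  then have "(g u Y0)^2 \<le> (p + q)^2"
    using pq by (metis abs_ge_zero power2_abs power_mono)
  also have "\<dots> \<le> 2*p^2 + 2*q^2"
    using zero_le_power2[of "p - q"] by (simp add: power2_eq_square algebra_simps)
  finally have "K * (g u Y0)^2 \<le> K * (2*p^2 + 2*q^2)" using K by (simp add: mult_left_mono)
  also have "\<dots> = 2*K*G^2*L^2*\<sigma>^2*(norm w)^2 + (2*K*G^2*\<eta>^2) * (norm u)^2"
    by (simp add: p_def q_def power_mult_distrib algebra_simps)
  also have "(2*K*G^2*\<eta>^2) * (norm u)^2 \<le> (a/2) * (norm u)^2"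
    using eta by (rule mult_right_mono) simp
  finally show ?thesis using coerc[of u] by simp
qed

text \<open>Kinetic term.  Integrating the pointwise estimate and bounding |V|^2 by the
  Poincare inequality: \<integral>g(V',V') \<ge> (a/2 - 2 K G^2 L^2 \<sigma>^2) \<integral>|V'|^2 on H_P(\<sigma>).\<close>

lemma kinetic_term_lower_bound:
  fixes g :: "real^'n \<Rightarrow> real^'n \<Rightarrow> real"
  assumes bil: "bilinear g"
    and coerc: "\<And>u. a * (norm u)^2 \<le> g u u + K * (g u Y0)^2" and K: "K \<ge> 0"
    and Gb: "\<And>x y. \<bar>g x y\<bar> \<le> G * norm x * norm y" and G: "G \<ge> 0"
    and Y_near: "\<And>s. s \<in> {0..\<sigma>} \<Longrightarrow> norm (Y s - Y0) \<le> \<eta>"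
    and Y'_bound: "\<And>s. s \<in> {0..\<sigma>} \<Longrightarrow> norm (Y' s) \<le> L"
    and eta: "2*K*G^2*\<eta>^2 \<le> a/2" and sig: "\<sigma> \<ge> 0"
    and V: "V \<in> HP_sigma g Y Y' P \<sigma>"
  shows "(a/2 - 2*K*G^2*L^2*\<sigma>^2) * integral {0..1} (\<lambda>t. (norm (H1_deriv V t))^2)
      \<le> integral {0..1} (\<lambda>t. g (H1_deriv V t) (H1_deriv V t))"
proof -
  define V' where "V' = H1_deriv V"
  define A where "A = integral {0..1} (\<lambda>t. (norm (V' t))^2)"
  define c where "c = 2*K*G^2*L^2"
  have VH: "V \<in> H1_P P"
    and constraint: "AE t in lebesgue_on {0..1}. g (V' t) (Y (\<sigma>*t)) - \<sigma> * g (V t) (Y' (\<sigma>*t)) = 0"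
    using V unfolding HP_sigma_def V'_def by auto
  have H: "is_H1_deriv V V'" and V1: "V 1 = 0"
    using VH by (simp_all add: H1_P_def V'_def H1_deriv_is_weak_derivative)
  have sq: "(\<lambda>t. (norm (V' t))^2) integrable_on {0..1}"
    using H by (simp add: is_H1_deriv_def)
  have pointwise: "AE t in lebesgue_on {0..1}. (a/2) * (norm (V' t))^2 - c*\<sigma>^2*A \<le> g (V' t) (V' t)"
    using constraint AE_space[of "lebesgue_on {0..1}"]
  proof eventually_elim
    case (elim t)
    then have t: "t \<in> {0..1}" by simp
    then have st: "\<sigma> * t \<in> {0..\<sigma>}" using sig by (auto intro: mult_right_le_one_le)
    have "g (V' t) (Y (\<sigma>*t)) = \<sigma> * g (V t) (Y' (\<sigma>*t))" using elim by simp
    from constrained_derivative_estimate[OF bil coerc K Gb G this Y_near[OF st] Y'_bound[OF st] eta sig]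
    have "(a/2) * (norm (V' t))^2 - c*\<sigma>^2*(norm (V t))^2 \<le> g (V' t) (V' t)"
      by (simp add: c_def)
    moreover have "c*\<sigma>^2*(norm (V t))^2 \<le> c*\<sigma>^2*A"
      using H1_vanishing_at_1_bound[OF H V1 t] K by (simp add: c_def A_def mult_left_mono)
    ultimately show ?case by linarith
  qed
  have "integral {0..1} (\<lambda>t. (a/2) * (norm (V' t))^2 - c*\<sigma>^2*A) \<le> integral {0..1} (\<lambda>t. g (V' t) (V' t))"
    by (intro integral_le_AE[OF H1_energy_integrable[OF bil H] _ pointwise]
        integrable_diff integrable_on_mult_right sq integrable_const_ivl)
  moreover have "((\<lambda>t. (a/2) * (norm (V' t))^2 - c*\<sigma>^2*A) has_integral (a/2)*A - c*\<sigma>^2*A) {0..1}"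
  proof (intro has_integral_diff)
    show "((\<lambda>t. (a/2) * (norm (V' t))^2) has_integral (a/2)*A) {0..1}"
      unfolding A_def by (intro has_integral_mult_right integrable_integral sq)
    show "((\<lambda>t::real. c*\<sigma>^2*A) has_integral c*\<sigma>^2*A) {0..1}"
      using has_integral_const_real[of "c*\<sigma>^2*A" 0 1] by simp
  qed
  ultimately show ?thesis by (simp add: integral_unique V'_def A_def c_def algebra_simps)
qed

text \<open>Potential term.  The integrand g(R(\<sigma> t) V, V) is continuous and bounded below
  by -G Rb |V|^2 \<ge> -G Rb \<integral>|V'|^2.\<close>

lemma potential_term_lower_bound:
  fixes g :: "real^'n \<Rightarrow> real^'n \<Rightarrow> real"
  assumes bil: "bilinear g" and Gb: "\<And>x y. \<bar>g x y\<bar> \<le> G * norm x * norm y" and G: "G \<ge> 0"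
    and R_cont: "continuous_on {0..\<sigma>} R"
    and R_bound: "\<And>s v. s \<in> {0..\<sigma>} \<Longrightarrow> norm (R s *v v) \<le> Rb * norm v" and Rb: "Rb \<ge> 0"
    and sig: "\<sigma> \<ge> 0" and V: "V \<in> H1_P P"
  shows "(\<lambda>t. g (R (\<sigma>*t) *v V t) (V t)) integrable_on {0..1}"
    and "- (G * Rb * integral {0..1} (\<lambda>t. (norm (H1_deriv V t))^2))
           \<le> integral {0..1} (\<lambda>t. g (R (\<sigma>*t) *v V t) (V t))"
proof -
  let ?A = "integral {0..1} (\<lambda>t. (norm (H1_deriv V t))^2)"
  have H: "is_H1_deriv V (H1_deriv V)" and V1: "V 1 = 0"
    using V by (simp_all add: H1_P_def H1_deriv_is_weak_derivative)
  have scaled: "\<sigma> * t \<in> {0..\<sigma>}" if "t \<in> {0..1}" for t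
    using that sig by (auto intro: mult_right_le_one_le)
  have "continuous_on {0..1} (\<lambda>t. R (\<sigma>*t))"
    by (rule continuous_on_compose2[OF R_cont]) (auto intro!: continuous_intros scaled)
  then have "continuous_on {0..1} (\<lambda>t. g (R (\<sigma>*t) *v V t) (V t))"
    using H1_continuous[OF H]
    by (intro bilinear_continuous_on_compose[OF _ _ bil] bilinear_continuous_on_compose[OF _ _ matrix_vector_mult_bilinear, simplified])
  then show int: "(\<lambda>t. g (R (\<sigma>*t) *v V t) (V t)) integrable_on {0..1}"
    by (rule integrable_continuous_interval)
  have "- (G * Rb * ?A) \<le> g (R (\<sigma>*t) *v V t) (V t)" if t: "t \<in> {0..1}" for t
  proof -
    have "\<bar>g (R (\<sigma>*t) *v V t) (V t)\<bar> \<le> G * norm (R (\<sigma>*t) *v V t) * norm (V t)" by (rule Gb)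
    also have "\<dots> \<le> G * (Rb * norm (V t)) * norm (V t)"
      using R_bound[OF scaled[OF t]] G by (intro mult_right_mono mult_left_mono) auto
    also have "\<dots> = G * Rb * (norm (V t))^2" by (simp add: power2_eq_square)
    also have "\<dots> \<le> G * Rb * ?A"
      using H1_vanishing_at_1_bound[OF H V1 t] G Rb by (intro mult_left_mono) auto
    finally show ?thesis by linarith
  qed
  then have "integral {0..1} (\<lambda>t::real. - (G * Rb * ?A)) \<le> integral {0..1} (\<lambda>t. g (R (\<sigma>*t) *v V t) (V t))"
    by (intro integral_le integrable_const_ivl int)
  then show "- (G * Rb * ?A) \<le> integral {0..1} (\<lambda>t. g (R (\<sigma>*t) *v V t) (V t))" by simp
qed

text \<open>Multiplying by \<sigma>,
  \<sigma> I(V,V) = \<integral>g(V',V') + \<sigma>^2 \<integral>g(RV,V) - \<sigma> g(SV(0),V(0)); the kinetic term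
  controls the two others once \<sigma> (2 K G^2 L^2 + G Rb + G Sb) \<le> a/2.\<close>

lemma I_hat_nonneg_for_small_sigma:
  fixes g :: "real^'n \<Rightarrow> real^'n \<Rightarrow> real"
  assumes bil: "bilinear g"
    and coerc: "\<And>u. a * (norm u)^2 \<le> g u u + K * (g u Y0)^2" and K: "K \<ge> 0"
    and Gb: "\<And>x y. \<bar>g x y\<bar> \<le> G * norm x * norm y" and G: "G \<ge> 0"
    and Y_near: "\<And>s. s \<in> {0..\<sigma>} \<Longrightarrow> norm (Y s - Y0) \<le> \<eta>"
    and Y'_bound: "\<And>s. s \<in> {0..\<sigma>} \<Longrightarrow> norm (Y' s) \<le> L"
    and eta: "2*K*G^2*\<eta>^2 \<le> a/2"
    and R_cont: "continuous_on {0..\<sigma>} R"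
    and R_bound: "\<And>s v. s \<in> {0..\<sigma>} \<Longrightarrow> norm (R s *v v) \<le> Rb * norm v" and Rb: "Rb \<ge> 0"
    and S_bound: "\<And>x. norm (S x) \<le> Sb * norm x" and Sb: "Sb \<ge> 0"
    and sig: "0 < \<sigma>" "\<sigma> \<le> 1"
    and small: "\<sigma> * (2*K*G^2*L^2 + G*Rb + G*Sb) \<le> a/2"
    and V: "V \<in> HP_sigma g Y Y' P \<sigma>"
  shows "I_hat g R S \<sigma> V V \<ge> 0"
proof -
  define A where "A = integral {0..1} (\<lambda>t. (norm (H1_deriv V t))^2)"
  define kinetic where "kinetic = integral {0..1} (\<lambda>t. g (H1_deriv V t) (H1_deriv V t))"
  define potential where "potential = integral {0..1} (\<lambda>t. g (R (\<sigma>*t) *v V t) (V t))"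
  define boundary where "boundary = g (S (V 0)) (V 0)"
  define c where "c = 2*K*G^2*L^2"
  have VH: "V \<in> H1_P P" using V by (simp add: HP_sigma_def)
  have H: "is_H1_deriv V (H1_deriv V)" and V1: "V 1 = 0"
    using VH by (simp_all add: H1_P_def H1_deriv_is_weak_derivative)
  have A: "A \<ge> 0"
    unfolding A_def using H by (intro integral_nonneg) (auto simp: is_H1_deriv_def)
  note potential_bounds = potential_term_lower_bound[OF bil Gb G R_cont R_bound Rb _ VH]
  have kin: "(a/2 - c*\<sigma>^2) * A \<le> kinetic"
    unfolding A_def kinetic_def c_def
    using kinetic_term_lower_bound[OF bil coerc K Gb G Y_near Y'_bound eta _ V] sig by simp
  have pot: "\<sigma>^2 * (- (G*Rb*A)) \<le> \<sigma>^2 * potential"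
    unfolding A_def potential_def using potential_bounds(2) sig by (intro mult_left_mono) auto
  have bd: "\<sigma> * boundary \<le> \<sigma> * (G*Sb*A)"
  proof -
    have "boundary \<le> G * norm (S (V 0)) * norm (V 0)"
      unfolding boundary_def using Gb[of "S (V 0)" "V 0"] by linarith
    also have "\<dots> \<le> G * (Sb * norm (V 0)) * norm (V 0)"
      using S_bound[of "V 0"] G by (intro mult_right_mono mult_left_mono) auto
    also have "\<dots> = G * Sb * (norm (V 0))^2" by (simp add: power2_eq_square)
    also have "\<dots> \<le> G * Sb * A"
      unfolding A_def using H1_vanishing_at_1_bound[OF H V1, of 0] G Sb by (intro mult_left_mono) auto
    finally show ?thesis using sig by (intro mult_left_mono) auto
  qed
  have scaled: "\<sigma> * I_hat g R S \<sigma> V V = kinetic + \<sigma>^2 * potential - \<sigma> * boundary"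
    using sig potential_bounds(1) H1_energy_integrable[OF bil H]
    by (simp add: I_hat_def kinetic_def potential_def boundary_def integral_add
        integrable_on_mult_right integral_mult_right field_simps power2_eq_square)
  \<comment> \<open>since \<sigma> \<le> 1, the quadratic terms in \<sigma> are dominated by linear ones\<close>
  have "\<sigma>^2 * (c*A) \<le> \<sigma> * (c*A)" and "\<sigma>^2 * (G*Rb*A) \<le> \<sigma> * (G*Rb*A)"
    using sig A K G Rb by (auto intro!: mult_right_mono simp: power2_eq_square c_def mult_left_le_one_le)
  moreover have "\<sigma> * (c + G*Rb + G*Sb) * A \<le> (a/2) * A"
    using small A by (intro mult_right_mono) (simp_all add: c_def)
  ultimately have "0 \<le> \<sigma> * I_hat g R S \<sigma> V V"
    using scaled kin pot bd by (simp add: algebra_simps)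
  then show ?thesis using sig by (simp add: zero_le_mult_iff)
qed

text \<open>Choice of the constants: all quantities entering the previous estimate are
  bounded uniformly for \<sigma> \<in> ]0,1], and Y(\<sigma> t) stays close to Y(0) for small \<sigma>.\<close>

lemma I_hat_nonneg_near_zero:
  fixes g :: "real^'n \<Rightarrow> real^'n \<Rightarrow> real" and R :: "real \<Rightarrow> real^'n^'n"
    and Y Y' :: "real \<Rightarrow> real^'n" and S :: "real^'n \<Rightarrow> real^'n"
  assumes bil: "bilinear g" and sym: "\<And>v w. g v w = g w v"
    and nondeg: "\<And>v. (\<forall>w. g v w = 0) \<Longrightarrow> v = 0" and idx: "form_index g UNIV \<le> 1"
    and Y0: "g (Y 0) (Y 0) < 0" and Y_cont: "continuous (at 0 within {0..1}) Y"
    and Y'_cont: "continuous_on {0..1} Y'" and R_cont: "continuous_on {0..1} R"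
    and S_lin: "linear S"
  obtains \<epsilon> where "\<epsilon> > 0" "\<epsilon> \<le> 1"
    "\<And>\<sigma> V. \<sigma> \<in> {0<..\<epsilon>} \<Longrightarrow> V \<in> HP_sigma g Y Y' P \<sigma> \<Longrightarrow> I_hat g R S \<sigma> V V \<ge> 0"
proof -
  define K where "K = -2 / g (Y 0) (Y 0)"
  have K: "K \<ge> 0" unfolding K_def using Y0 by (simp add: divide_nonneg_neg)
  obtain a where a: "a > 0" "\<And>u. a * (norm u)^2 \<le> g u u + K * (g u (Y 0))^2"
    using lorentzian_coercive[OF bil sym nondeg idx Y0] unfolding K_def by blast
  obtain G where G: "G > 0" and Gb: "\<And>x y. \<bar>g x y\<bar> \<le> G * norm x * norm y"
    using bilinear_bounded_pos[OF bil] by auto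
  obtain L where L: "\<And>s. s \<in> {0..1} \<Longrightarrow> norm (Y' s) \<le> L"
    using compact_imp_bounded[OF compact_continuous_image[OF Y'_cont compact_Icc]]
    unfolding bounded_iff by blast
  obtain Rb where Rb: "Rb \<ge> 0" "\<And>s v. s \<in> {0..1} \<Longrightarrow> norm (R s *v v) \<le> Rb * norm v"
    using continuous_matrix_operator_bound[OF R_cont] by blast
  obtain Sb where Sb: "Sb > 0" "\<And>x. norm (S x) \<le> norm x * Sb"
    using S_lin linear_conv_bounded_linear bounded_linear.pos_bounded by blast
  obtain \<eta> where \<eta>: "\<eta> > 0" and eta: "2*K*G^2*\<eta>^2 \<le> a/2"
    using small_square_parameter_exists[of "a/2" "2*K*G^2"] a(1) K by auto
  obtain \<delta> where \<delta>: "\<delta> > 0" "\<And>s. s \<in> {0..1} \<Longrightarrow> dist s 0 < \<delta> \<Longrightarrow> dist (Y s) (Y 0) < \<eta>"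
    using Y_cont \<eta> unfolding continuous_within_eps_delta by blast
  define M where "M = 2*K*G^2*L^2 + G*Rb + G*Sb"
  have "M \<ge> 0" unfolding M_def using K G Rb Sb by simp
  then obtain \<epsilon> where \<epsilon>: "\<epsilon> > 0" "\<epsilon> \<le> 1" "\<epsilon> < \<delta>" "\<epsilon> * M \<le> a/2"
    using small_parameter_exists[of \<delta> "a/2" M] \<delta>(1) a(1) by auto
  have Sb': "\<And>x. norm (S x) \<le> Sb * norm x" using Sb(2) by (simp add: mult.commute)
  have "I_hat g R S \<sigma> V V \<ge> 0" if \<sigma>: "\<sigma> \<in> {0<..\<epsilon>}" and V: "V \<in> HP_sigma g Y Y' P \<sigma>" for \<sigma> V
  proof -
    have \<sigma>01: "0 < \<sigma>" "\<sigma> \<le> 1" and sub: "{0..\<sigma>} \<subseteq> {0..1}" using \<sigma> \<epsilon> by auto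
    have near: "norm (Y s - Y 0) \<le> \<eta>" if "s \<in> {0..\<sigma>}" for s
    proof -
      have "s \<in> {0..1}" "dist s 0 < \<delta>" using that \<sigma> \<epsilon> by auto
      then have "dist (Y s) (Y 0) < \<eta>" by (rule \<delta>(2))
      then show ?thesis by (simp add: dist_norm)
    qed
    have "\<sigma> * M \<le> \<epsilon> * M" using \<sigma> \<open>M \<ge> 0\<close> by (intro mult_right_mono) auto
    then have small: "\<sigma> * (2*K*G^2*L^2 + G*Rb + G*Sb) \<le> a/2" using \<epsilon>(4) by (simp add: M_def)
    show ?thesis
      using sub by (intro I_hat_nonneg_for_small_sigma[OF bil a(2) K Gb _ near _ eta _ _ Rb(1) Sb' _ \<sigma>01 small V])
        (auto intro: L Rb(2) continuous_on_subset[OF R_cont] less_imp_le G Sb(1))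
  qed
  with \<epsilon>(1,2) that show ?thesis by blast
qed

theorem mainTheorem12:
  fixes g :: "real^'n \<Rightarrow> real^'n \<Rightarrow> real"
    and R :: "real \<Rightarrow> real^'n^'n"
    and Y Y' :: "real \<Rightarrow> real^'n"
    and P :: "(real^'n) set"
    and S :: "real^'n \<Rightarrow> real^'n"
  assumes g_bil: "bilinear g"
    and g_sym: "\<And>v w. g v w = g w v"
    and g_nondeg: "\<And>v. (\<forall>w. g v w = 0) \<Longrightarrow> v = 0"
    and g_index: "form_index g UNIV = 1"
    and R_cont: "continuous_on {0..1} R"
    and R_sym: "\<And>t v w. t \<in> {0..1} \<Longrightarrow> g (R t *v v) w = g v (R t *v w)"
    and Y_deriv: "\<And>t. t \<in> {0..1} \<Longrightarrow> (Y has_vector_derivative Y' t) (at t within {0..1})"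
    and Y'_deriv: "\<And>t. t \<in> {0..1} \<Longrightarrow> (Y' has_vector_derivative (R t *v Y t)) (at t within {0..1})"
    and Y_timelike: "\<And>t. t \<in> {0..1} \<Longrightarrow> g (Y t) (Y t) < 0"
    and P_sub: "subspace P"
    and P_nondeg: "\<And>v. v \<in> P \<Longrightarrow> (\<forall>w\<in>P. g v w = 0) \<Longrightarrow> v = 0"
    and S_lin: "linear S"
    and S_P: "S ` P \<subseteq> P"
    and S_sym: "\<And>v w. v \<in> P \<Longrightarrow> w \<in> P \<Longrightarrow> g (S v) w = g v (S w)"
  shows "((\<forall>v\<in>P. g (Y 0) v = 0) \<longrightarrow>
            (\<exists>\<epsilon>>0. \<epsilon> \<le> 1 \<and> (\<forall>\<sigma>\<in>{0<..\<epsilon>}.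
               fun_form_index (I_hat g R S \<sigma>) (HP_sigma g Y Y' P \<sigma>) = 0)))
       \<and> (\<not> (\<forall>v\<in>P. g (Y 0) v = 0) \<longrightarrow>
            fun_form_index (C0 g) (HP_sigma g Y Y' P 0) = 0)"
proof -
  have Y0: "g (Y 0) (Y 0) < 0" using Y_timelike by simp
  have idx: "form_index g UNIV \<le> 1" using g_index by simp
  have Y_cont: "continuous (at 0 within {0..1}) Y"
    using Y_deriv[of 0] has_vector_derivative_continuous by auto
  have Y'_cont: "continuous_on {0..1} Y'"
    using Y'_deriv has_vector_derivative_continuous continuous_on_eq_continuous_within by blast
  obtain \<epsilon> where \<epsilon>: "\<epsilon> > 0" "\<epsilon> \<le> 1"
    "\<And>\<sigma> V. \<sigma> \<in> {0<..\<epsilon>} \<Longrightarrow> V \<in> HP_sigma g Y Y' P \<sigma> \<Longrightarrow> I_hat g R S \<sigma> V V \<ge> 0"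
    using I_hat_nonneg_near_zero[OF g_bil g_sym g_nondeg idx Y0 Y_cont Y'_cont R_cont S_lin] by blast
  then have "\<forall>\<sigma>\<in>{0<..\<epsilon>}. fun_form_index (I_hat g R S \<sigma>) (HP_sigma g Y Y' P \<sigma>) = 0"
    by (auto intro: fun_form_index_eq_0_if_nonneg)
  moreover have "fun_form_index (C0 g) (HP_sigma g Y Y' P 0) = 0"
    using orthogonal_to_timelike_nonneg[OF g_bil g_sym idx Y0]
    by (intro fun_form_index_eq_0_if_nonneg C0_nonneg_on_HP0[OF g_bil]) auto
  ultimately show ?thesis using \<epsilon>(1,2) by blast
qed

end
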